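(* Let $\mathbb{E}$ be a finite-dimensional Euclidean space, $\mathcal{K}\subseteq\mathbb{E}$ a closed convex cone, $\mathcal{A}:\mathbb{E}\to\mathbb{R}^m$ a surjective linear map and $b\in\mathbb{R}^m$, and let $\mathcal{F}=\{x\in\mathcal{K}:\mathcal{A}x=b\}\neq\emptyset$. Let $\bar x$ be an extreme point of $\mathcal{F}$. Then $\dim\operatorname{face}(\bar x,\mathcal{K})\le m-\operatorname{ips}(\mathcal{F})$.
   Context: $\operatorname{face}(\bar x,\mathcal{K})$ is the minimal face of $\mathcal{K}$ containing $\bar x$. Strict feasibility of $\{x\in C:\mathcal{A}x=b\}$ with respect to a closed convex cone $C$ means that this set contains a point of $\operatorname{relint}(C)$. For a cone $C$, $C^*$ is its dual cone and $C^\perp$ its orthogonal complement. Facial reduction process: set $\mathcal{K}^0=\mathcal{K}$, $k=0$; while strict feasibility fails for $\{x\in\mathcal{K}^k:\mathcal{A}x=b\}$ with respect to $\mathcal{K}^k$, increase $k$ by one, choose $y^k\in\mathbb{R}^m$ with $\mathcal{A}^*y^k\in(\mathcal{K}^{k-1})^*\setminus(\mathcal{K}^{k-1})^\perp$ and $\langle b,y^k\rangle=0$, and set $\mathcal{K}^k=\mathcal{K}^{k-1}\cap(\mathcal{A}^*y^k)^\perp$. Let $\bar{\mathcal{K}}=\mathcal{K}\cap(\mathcal{A}^*y^1)^\perp\cap\cdots\cap(\mathcal{A}^*y^k)^\perp$ be the cone at termination. The implicit problem singularity $\operatorname{ips}(\mathcal{F})$ is the number of redundant equalities in the system $\{x\in\bar{\mathcal{K}}:\mathcal{A}x=b\}$,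 i.e. $m$ minus the rank of $\mathcal{A}$ restricted to $\operatorname{span}\bar{\mathcal{K}}$. *)

theory Defs
  imports "HOL-Analysis.Analysis"
begin

definition min_face :: "'a::euclidean_space \<Rightarrow> 'a set \<Rightarrow> 'a set" where
  "min_face x K = \<Inter> {F. F face_of K \<and> x \<in> F}"

definition dual_cone :: "'a::real_inner set \<Rightarrow> 'a set" where
  "dual_cone C = {z. \<forall>x\<in>C. 0 \<le> inner z x}"

definition orth_compl :: "'a::real_inner set \<Rightarrow> 'a set" where
  "orth_compl C = {z. \<forall>x\<in>C. inner z x = 0}"

definition strictly_feasible :: "'a::euclidean_space set \<Rightarrow> ('a \<Rightarrow> real^'m) \<Rightarrow> real^'m \<Rightarrow> bool" where
  "strictly_feasible C A b \<longleftrightarrow> (\<exists>x\<in>rel_interior C. x \<in> C \<and> A x = b)"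

text \<open>Cone after the facial reduction steps y^1, ..., y^k (given as a list).\<close>
definition fr_cone :: "'a::euclidean_space set \<Rightarrow> ('a \<Rightarrow> real^'m) \<Rightarrow> (real^'m) list \<Rightarrow> 'a set" where
  "fr_cone K A ys = K \<inter> (\<Inter>y\<in>set ys. orth_compl {adjoint A y})"

definition fr_valid :: "'a::euclidean_space set \<Rightarrow> ('a \<Rightarrow> real^'m) \<Rightarrow> real^'m \<Rightarrow> (real^'m) list \<Rightarrow> bool" where
  "fr_valid K A b ys \<longleftrightarrow> (\<forall>k < length ys.
     \<not> strictly_feasible (fr_cone K A (take k ys)) A b \<and>
     adjoint A (ys ! k) \<in> dual_cone (fr_cone K A (take k ys)) - orth_compl (fr_cone K A (take k ys)) \<and>
     inner b (ys ! k) = 0)"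

definition fr_terminated :: "'a::euclidean_space set \<Rightarrow> ('a \<Rightarrow> real^'m) \<Rightarrow> real^'m \<Rightarrow> (real^'m) list \<Rightarrow> bool" where
  "fr_terminated K A b ys \<longleftrightarrow> fr_valid K A b ys \<and> strictly_feasible (fr_cone K A ys) A b"

definition ips :: "'a::euclidean_space set \<Rightarrow> ('a \<Rightarrow> real^'m::finite) \<Rightarrow> (real^'m) list \<Rightarrow> int" where
  "ips K A ys = int CARD('m) - int (dim (A ` span (fr_cone K A ys)))"

end

theory Submission
  imports Defs
begin

(* The minimal face G of K at the extreme point x of F contains x in its relative interior
   and, K being a cone, also contains 0, so its affine hull is span G.  A nonzero d in span G
   with A d = 0 would therefore give a segment x +- t d inside G and inside the fibre A = b,
   i.e. inside F, with x as its midpoint. *)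

lemma fr_cone_Nil: "fr_cone K A [] = K"
  by (simp add: fr_cone_def)

lemma fr_cone_snoc:
  "fr_cone K A (ys @ [y]) = fr_cone K A ys \<inter> {x. adjoint A y \<bullet> x = 0}"
  by (auto simp: fr_cone_def orth_compl_def inner_commute)

lemma fr_valid_snoc:
  "fr_valid K A b (ys @ [y]) \<longleftrightarrow> fr_valid K A b ys \<and>
     \<not> strictly_feasible (fr_cone K A ys) A b \<and>
     adjoint A y \<in> dual_cone (fr_cone K A ys) - orth_compl (fr_cone K A ys) \<and>
     inner b y = 0"
  unfolding fr_valid_def by (simp add: less_Suc_eq all_conj_distrib nth_append)

lemma fr_cone_face_of:
  assumes "convex K" and "fr_valid K A b ys"
  shows "fr_cone K A ys face_of K"
  using assms(2)
proof (induction ys rule: rev_induct)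
  case Nil
  then show ?case by (simp add: fr_cone_Nil face_of_refl assms(1))
next
  case (snoc y ys)
  let ?C = "fr_cone K A ys"
  have face: "?C face_of K" and "adjoint A y \<in> dual_cone ?C"
    using snoc by (auto simp: fr_valid_snoc)
  then have "\<And>x. x \<in> ?C \<Longrightarrow> adjoint A y \<bullet> x \<ge> 0"
    by (simp add: dual_cone_def)
  then have "?C \<inter> {x. adjoint A y \<bullet> x = 0} face_of ?C"
    by (rule face_of_Int_supporting_hyperplane_ge[OF face_of_imp_convex[OF face]])
  then show ?case
    unfolding fr_cone_snoc using face by (rule face_of_trans)
qed

lemma feasible_mem_fr_cone:
  assumes "linear A" and "fr_valid K A b ys" and "x \<in> K" and "A x = b"
  shows "x \<in> fr_cone K A ys"
  using assms(2)
proof (induction ys rule: rev_induct)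
  case Nil
  then show ?case by (simp add: fr_cone_Nil assms(3))
next
  case (snoc y ys)
  then have "inner b y = 0" and "x \<in> fr_cone K A ys"
    by (simp_all add: fr_valid_snoc)
  moreover have "adjoint A y \<bullet> x = b \<bullet> y"
    using adjoint_works[OF assms(1), of x y] assms(4) inner_commute by metis
  ultimately show ?case by (simp add: fr_cone_snoc)
qed

lemma mem_min_face: "x \<in> min_face x K"
  by (simp add: min_face_def)

lemma min_face_subset: "F face_of K \<Longrightarrow> x \<in> F \<Longrightarrow> min_face x K \<subseteq> F"
  by (auto simp: min_face_def)

lemma min_face_face_of:
  assumes "convex K" and "x \<in> K"
  shows "min_face x K face_of K"
  unfolding min_face_def by (rule face_of_Inter) (use assms face_of_refl in auto)

lemma rel_interior_min_face:
  assumes "convex K" and "x \<in> K"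
  shows "x \<in> rel_interior (min_face x K)"
proof (rule ccontr)
  let ?G = "min_face x K"
  assume "x \<notin> rel_interior ?G"
  have G: "?G face_of K"
    using min_face_face_of[OF assms] .
  have convex: "convex ?G"
    using face_of_imp_convex[OF G] .
  have x: "x \<in> ?G"
    by (rule mem_min_face)
  obtain a where "a \<noteq> 0" and ge: "\<And>y. y \<in> closure ?G \<Longrightarrow> a \<bullet> x \<le> a \<bullet> y"
    and gt: "\<And>y. y \<in> rel_interior ?G \<Longrightarrow> a \<bullet> x < a \<bullet> y"
    using supporting_hyperplane_relative_frontier[OF convex closure_subset[THEN subsetD, OF x]
        \<open>x \<notin> rel_interior ?G\<close>] by blast
  define F where "F = ?G \<inter> {y. a \<bullet> y = a \<bullet> x}"
  have "F face_of ?G"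
    unfolding F_def by (rule face_of_Int_supporting_hyperplane_ge[OF convex])
      (use ge closure_subset in blast)
  then have "F face_of K"
    using G by (rule face_of_trans)
  then have "?G \<subseteq> F"
    by (rule min_face_subset) (simp add: F_def x)
  moreover obtain z where "z \<in> rel_interior ?G"
    using rel_interior_eq_empty convex x by blast
  ultimately show False
    using gt rel_interior_subset unfolding F_def by fastforce
qed

lemma zero_mem_face_of_cone:
  assumes "cone K" and "F face_of K" and "F \<noteq> {}"
  shows "0 \<in> F"
proof -
  have "conic K"
    using assms(1) by (simp add: cone_def conic_def)
  then have "conic F"
    using assms(2) by (rule face_of_conic)
  then show ?thesis
    using assms(3) by (simp add: conic_contains_0)
qed

lemma mem_open_segment_add_diff:
  fixes x d :: "'a::real_normed_vector"
  assumes "d \<noteq> 0"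
  shows "x \<in> open_segment (x + d) (x - d)"
proof -
  have "midpoint (x + d) (x - d) = x"
    by (simp add: midpoint_def algebra_simps scaleR_2 [symmetric])
  moreover have "x + d \<noteq> x - d"
    using assms by (simp add: eq_neg_iff_add_eq_0 flip: diff_conv_add_uminus scaleR_2)
  ultimately show ?thesis
    using midpoint_in_open_segment by metis
qed

lemma extreme_point_of_subset:
  "x extreme_point_of S \<Longrightarrow> T \<subseteq> S \<Longrightarrow> x \<in> T \<Longrightarrow> x extreme_point_of T"
  by (auto simp: extreme_point_of_def)

lemma inj_on_span_if_extreme_point_of_fibre:
  fixes S :: "'a::euclidean_space set"
  assumes "linear A" and "0 \<in> S" and "x \<in> rel_interior S"
    and "x extreme_point_of {y \<in> S. A y = A x}"
  shows "inj_on A (span S)"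
  unfolding linear_inj_on_iff_eq_0[OF assms(1) subspace_span]
proof (intro ballI impI)
  fix d assume d: "d \<in> span S" and "A d = 0"
  show "d = 0"
  proof (rule ccontr)
    assume "d \<noteq> 0"
    obtain e where "e > 0" and ball: "cball x e \<inter> span S \<subseteq> S"
      using assms(3) affine_hull_span_0[OF hull_inc[OF assms(2)]]
      unfolding mem_rel_interior_cball by metis
    define u where "u = (e / norm d) *\<^sub>R d"
    have "u \<noteq> 0" "norm u = e" "A u = 0"
      using \<open>e > 0\<close> \<open>d \<noteq> 0\<close> \<open>A d = 0\<close> linear_scale[OF assms(1)] by (auto simp: u_def)
    have "x \<in> span S"
      using assms(3) rel_interior_subset span_base by blast
    then have "x + u \<in> span S" "x - u \<in> span S"
      using d by (auto simp: u_def intro: span_add span_diff span_scale)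
    then have "x + u \<in> S" "x - u \<in> S"
      using ball \<open>norm u = e\<close> by (auto simp: dist_norm)
    moreover have "A (x + u) = A x" "A (x - u) = A x"
      using \<open>A u = 0\<close> linear_add[OF assms(1)] linear_diff[OF assms(1)] by auto
    ultimately show False
      using assms(4) mem_open_segment_add_diff[OF \<open>u \<noteq> 0\<close>, of x]
      unfolding extreme_point_of_def by blast
  qed
qed

theorem theorem4p4:
  fixes K :: "'a::euclidean_space set" and A :: "'a \<Rightarrow> real^'m" and b :: "real^'m"
    and xbar :: 'a and ys :: "(real^'m) list"
  assumes "closed K" and "convex K" and "cone K"
    and "linear A" and "surj A"
    and "{x \<in> K. A x = b} \<noteq> {}"
    and "xbar extreme_point_of {x \<in> K. A x = b}"
    and "fr_terminated K A b ys"
  shows "int (dim (min_face xbar K)) \<le> int CARD('m) - ips K A ys"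
proof -
  let ?G = "min_face xbar K"
  have valid: "fr_valid K A b ys"
    using assms(8) by (simp add: fr_terminated_def)
  have "xbar \<in> K" and "A xbar = b"
    using assms(7) by (auto simp: extreme_point_of_def)
  have G: "?G face_of K"
    using min_face_face_of[OF assms(2) \<open>xbar \<in> K\<close>] .
  have "xbar extreme_point_of {y \<in> ?G. A y = A xbar}"
    using face_of_imp_subset[OF G] mem_min_face \<open>A xbar = b\<close>
    by (intro extreme_point_of_subset[OF assms(7)]) auto
  then have "inj_on A (span ?G)"
    using inj_on_span_if_extreme_point_of_fibre[OF assms(4)] rel_interior_min_face[OF assms(2)]
      zero_mem_face_of_cone[OF assms(3) G] mem_min_face \<open>xbar \<in> K\<close> by blast
  then have "dim ?G = dim (A ` ?G)"
    using dim_image_eq[OF assms(4)] by metis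
  also have "\<dots> \<le> dim (A ` span (fr_cone K A ys))"
    using min_face_subset[OF fr_cone_face_of[OF assms(2) valid]]
      feasible_mem_fr_cone[OF assms(4) valid \<open>xbar \<in> K\<close> \<open>A xbar = b\<close>] span_superset
    by (intro dim_subset) blast
  finally show ?thesis
    by (simp add: ips_def)
qed

end
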